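(* For any $L\in\mathcal{L}$ and any $\gamma$-point, the 1-form $\operatorname{tr}(L\omega)$ has at most a simple pole at $\gamma$, and $\operatorname{res}_\gamma\operatorname{tr}(L\omega)=2(\kappa_1+\kappa_2)(L)$.
   Context: $\mathfrak{g}=G_2$ is realized as $7\times7$ matrices $\begin{pmatrix} 0 & -\sqrt{2}a_2^t & -\sqrt{2}a_1^t \\ \sqrt{2}a_1 & A & [a_2] \\ \sqrt{2}a_2 & [a_1] & -A^t \end{pmatrix}$ ($a_i\in\mathbb{C}^3$, $A$ traceless $3\times3$, $[x]$ the skew-symmetric matrix with $[x]y=x\times y$). $\mathcal{L}$ is the Lie algebra of $\mathfrak{g}$-valued meromorphic functions on a Riemann surface with marked points $P_i,Q_j,\gamma_s$, holomorphic outside them, such that at each $\gamma$ (with fixed $\alpha_1,\alpha_2\in\mathbb{C}^3$, $\alpha_1^t\alpha_2=0$, local coordinate $z$) $L=L_{-2}z^{-2}+L_{-1}z^{-1}+L_0+L_1z+\ldots$ with $L_{-2}=\mu\,\mathrm{diag}(0,\alpha_1\alpha_2^t,-\alpha_2\alpha_1^t)$; $L_{-1}=\begin{pmatrix} 0 & -\sqrt{2}\beta_{02}\alpha_2^t & -\sqrt{2}\beta_{01}\alpha_1^t \\ \sqrt{2}\beta_{01}\alpha_1 & \alpha_1\beta_2^t-\beta_1\alpha_2^t & \beta_{02}[\alpha_2] \\ \sqrt{2}\beta_{02}\alpha_2 & \beta_{01}[\alpha_1] & \alpha_2\beta_1^t-\beta_2\alpha_1^t \end{pmatrix}$ with $\alpha_1^t\beta_2=\alpha_2^t\beta_1=0$;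 $L_0$ with entries $a_1,a_2,A$ satisfying $\alpha_1^ta_2=\alpha_2^ta_1=0$, $A\alpha_1=\kappa_1\alpha_1$, $-A^t\alpha_2=\kappa_2\alpha_2$ (these $\kappa_1,\kappa_2$ are denoted $\kappa_1(L),\kappa_2(L)$, and $(\kappa_1+\kappa_2)(L)=\kappa_1(L)+\kappa_2(L)$); and the $(2,2)$ block $B$ of $L_1$ satisfying $\alpha_2^tB\alpha_1=0$. $\omega$ is a $\mathfrak{g}$-valued 1-form with expansion $\omega=\omega_{-1}\frac{dz}{z}+\omega_0dz+\omega_1z\,dz+\ldots$ at $\gamma$, where $\omega_{-1}$ has the form of $L_{-1}$ with parameters $\tilde\beta_{01},\tilde\beta_{02},\tilde\beta_1,\tilde\beta_2$ satisfying $\alpha_1^t\tilde\beta_2=1$, $\alpha_2^t\tilde\beta_1=1$; $\omega_0$ has the $G_2$ form with entries $w_1,w_2,W$ satisfying $\alpha_1^tw_2=0$, $\alpha_2^tw_1=0$, $W\alpha_1=\tilde\kappa_1\alpha_1$, $-W^t\alpha_2=\tilde\kappa_2\alpha_2$; and the $(2,2)$ block $W_1$ of $\omega_1$ satisfies $\alpha_2^tW_1\alpha_1=0$. *)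

theory Defs
  imports "HOL-Analysis.Analysis" "HOL-Computational_Algebra.Formal_Laurent_Series"
begin

text \<open>Vectors in C^3 are functions nat => complex (indices 0,1,2); 3x3 and 7x7 matrices
  are functions nat => nat => complex (indices < 3, resp. < 7).\<close>

type_synonym cvec = "nat \<Rightarrow> complex"
type_synonym cmat = "nat \<Rightarrow> nat \<Rightarrow> complex"

definition dot3 :: "cvec \<Rightarrow> cvec \<Rightarrow> complex" where
  "dot3 x y = (\<Sum>i<3. x i * y i)"

definition mv3 :: "cmat \<Rightarrow> cvec \<Rightarrow> cvec" where
  "mv3 A x = (\<lambda>i. if i < 3 then (\<Sum>j<3. A i j * x j) else 0)"

definition transp3 :: "cmat \<Rightarrow> cmat" where
  "transp3 A = (\<lambda>i j. A j i)"

definition outer3 :: "cvec \<Rightarrow> cvec \<Rightarrow> cmat" where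
  "outer3 a b = (\<lambda>i j. if i < 3 \<and> j < 3 then a i * b j else 0)"

definition trace3 :: "cmat \<Rightarrow> complex" where
  "trace3 A = (\<Sum>i<3. A i i)"

definition cross3 :: "cvec \<Rightarrow> cvec \<Rightarrow> cvec" where
  "cross3 x y = (\<lambda>i. if i = 0 then x 1 * y 2 - x 2 * y 1
                     else if i = 1 then x 2 * y 0 - x 0 * y 2
                     else if i = 2 then x 0 * y 1 - x 1 * y 0 else 0)"

text \<open>The skew-symmetric matrix [x] with [x] y = x \<times> y.\<close>
definition skew3 :: "cvec \<Rightarrow> cmat" where
  "skew3 x = (\<lambda>i j. if j < 3 then cross3 x (\<lambda>k. if k = j then 1 else 0) i else 0)"

text \<open>The 7x7 matrix of G2 with entries a1, a2, A (block sizes 1,3,3).\<close>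
definition g2mat :: "cvec \<Rightarrow> cvec \<Rightarrow> cmat \<Rightarrow> cmat" where
  "g2mat a1 a2 A = (\<lambda>i j.
     if i = 0 then
       (if j = 0 then 0
        else if j \<le> 3 then - complex_of_real (sqrt 2) * a2 (j - 1)
        else if j \<le> 6 then - complex_of_real (sqrt 2) * a1 (j - 4) else 0)
     else if i \<le> 3 then
       (if j = 0 then complex_of_real (sqrt 2) * a1 (i - 1)
        else if j \<le> 3 then A (i - 1) (j - 1)
        else if j \<le> 6 then skew3 a2 (i - 1) (j - 4) else 0)
     else if i \<le> 6 then
       (if j = 0 then complex_of_real (sqrt 2) * a2 (i - 4)
        else if j \<le> 3 then skew3 a1 (i - 4) (j - 1)
        else if j \<le> 6 then - A (j - 4) (i - 4) else 0)
     else 0)"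

definition G2 :: "cmat set" where
  "G2 = {g2mat a1 a2 A | a1 a2 A. trace3 A = 0}"

text \<open>A g-valued Laurent series is a matrix of scalar formal Laurent series (in the local
  coordinate z); its k-th coefficient matrix:\<close>
definition mcoeff :: "(nat \<Rightarrow> nat \<Rightarrow> complex fls) \<Rightarrow> int \<Rightarrow> cmat" where
  "mcoeff L k = (\<lambda>i j. fls_nth (L i j) k)"

definition tr_prod :: "(nat \<Rightarrow> nat \<Rightarrow> complex fls) \<Rightarrow> (nat \<Rightarrow> nat \<Rightarrow> complex fls) \<Rightarrow> complex fls" where
  "tr_prod L M = (\<Sum>i<7. \<Sum>j<7. L i j * M j i)"

end

theory Submission
  imports Defs
begin

unbundle fps_syntax

text \<open>The coefficients of \<open>tr(L\<omega>)\<close> of order \<open>-3, -2, -1\<close> are sums of pairings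
  \<open>tr(L\<^sub>k \<omega>\<^sub>l)\<close> of Laurent coefficients. On \<open>G\<^sub>2\<close> the trace form is
  \<open>2 tr(AB) - 6 (a\<^sub>1\<^sup>t b\<^sub>2 + a\<^sub>2\<^sup>t b\<^sub>1)\<close>, so against the rank-one blocks \<open>\<alpha>\<^sub>1 \<beta>\<^sub>2\<^sup>t - \<beta>\<^sub>1 \<alpha>\<^sub>2\<^sup>t\<close>
  of the pole coefficients a matrix \<open>X\<close> is only seen through \<open>\<alpha>\<^sub>2\<^sup>t X \<alpha>\<^sub>1\<close> and
  \<open>\<beta>\<^sub>2\<^sup>t X \<alpha>\<^sub>1 - \<alpha>\<^sub>2\<^sup>t X \<beta>\<^sub>1\<close>. The orthogonality and eigenvector conditions make every pairing
  vanish except \<open>tr(L\<^sub>0 \<omega>\<^sub>-\<^sub>1) = 2(\<kappa>\<^sub>1 \<alpha>\<^sub>1\<^sup>t \<beta>\<^sub>2' + \<kappa>\<^sub>2 \<alpha>\<^sub>2\<^sup>t \<beta>\<^sub>1')\<close>, where the normalisation of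
  \<open>\<omega>\<^sub>-\<^sub>1\<close> sets both products to 1.\<close>

definition trace_prod3 :: "cmat \<Rightarrow> cmat \<Rightarrow> complex" where
  "trace_prod3 X Y = (\<Sum>i<3. \<Sum>j<3. X i j * Y j i)"

definition trace_prod7 :: "cmat \<Rightarrow> cmat \<Rightarrow> complex" where
  "trace_prod7 X Y = (\<Sum>i<7. \<Sum>j<7. X i j * Y j i)"

definition double_pole_coeff :: "complex \<Rightarrow> cvec \<Rightarrow> cvec \<Rightarrow> cmat" where
  "double_pole_coeff \<mu> \<alpha>1 \<alpha>2 = g2mat (\<lambda>_. 0) (\<lambda>_. 0) (\<lambda>i j. \<mu> * outer3 \<alpha>1 \<alpha>2 i j)"

definition simple_pole_coeff ::
    "cvec \<Rightarrow> cvec \<Rightarrow> complex \<Rightarrow> complex \<Rightarrow> cvec \<Rightarrow> cvec \<Rightarrow> cmat" where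
  "simple_pole_coeff \<alpha>1 \<alpha>2 c1 c2 \<beta>1 \<beta>2 =
     g2mat (\<lambda>i. c1 * \<alpha>1 i) (\<lambda>i. c2 * \<alpha>2 i) (\<lambda>i j. outer3 \<alpha>1 \<beta>2 i j - outer3 \<beta>1 \<alpha>2 i j)"

lemma dot3_commute: "dot3 x y = dot3 y x"
  unfolding dot3_def by (simp add: mult.commute)

lemma dot3_scale_left: "dot3 (\<lambda>i. c * x i) y = c * dot3 x y"
  unfolding dot3_def by (simp add: sum_distrib_left algebra_simps)

lemma dot3_scale_right: "dot3 x (\<lambda>i. c * y i) = c * dot3 x y"
  unfolding dot3_def by (simp add: sum_distrib_left algebra_simps)

lemma dot3_zero_left: "dot3 (\<lambda>_. 0) x = 0"
  unfolding dot3_def by simp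

lemma dot3_mv3_outer3: "dot3 x (mv3 (outer3 a b) c) = dot3 b c * dot3 x a"
  unfolding dot3_def mv3_def outer3_def by (simp add: lessThan_nat_numeral algebra_simps)

lemma dot3_mv3_diff: "dot3 x (mv3 (\<lambda>i j. X i j - Y i j) y) = dot3 x (mv3 X y) - dot3 x (mv3 Y y)"
  unfolding dot3_def mv3_def by (simp add: lessThan_nat_numeral algebra_simps)

lemma dot3_mv3_minus_transp3: "dot3 x (mv3 (\<lambda>i j. - transp3 A i j) y) = - dot3 y (mv3 A x)"
  unfolding dot3_def mv3_def transp3_def by (simp add: lessThan_nat_numeral algebra_simps)

lemma dot3_mv3_left_eigenvector:
  assumes "mv3 (\<lambda>i j. - transp3 A i j) y = (\<lambda>i. k * y i)"
  shows "dot3 y (mv3 A x) = - k * dot3 x y"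
  using dot3_mv3_minus_transp3[of x A y] by (simp add: assms dot3_scale_right)

lemma trace_prod3_outer3_left: "trace_prod3 (outer3 a b) Y = dot3 b (mv3 Y a)"
  unfolding trace_prod3_def dot3_def mv3_def outer3_def
  by (simp add: lessThan_nat_numeral algebra_simps)

lemma trace_prod3_diff_left: "trace_prod3 (\<lambda>i j. Y i j - Z i j) X = trace_prod3 Y X - trace_prod3 Z X"
  unfolding trace_prod3_def by (simp add: lessThan_nat_numeral algebra_simps)

lemma trace_prod3_scale_left: "trace_prod3 (\<lambda>i j. c * Y i j) X = c * trace_prod3 Y X"
  unfolding trace_prod3_def by (simp add: lessThan_nat_numeral algebra_simps)

lemma trace_prod7_commute: "trace_prod7 X Y = trace_prod7 Y X"
  unfolding trace_prod7_def by (subst sum.swap) (simp add: mult.commute)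

lemma sum_lessThan_7:
  "(\<Sum>i<7. f (i::nat)) = f 0 + f 1 + f 2 + f 3 + f 4 + f 5 + (f 6 :: complex)"
  by (simp add: eval_nat_numeral add.commute add.left_commute)

lemma sum_lessThan_3: "(\<Sum>i<3. f (i::nat)) = f 0 + f 1 + (f 2 :: complex)"
  by (simp add: eval_nat_numeral add.commute add.left_commute)

text \<open>The first row and column contribute \<open>-4 (a\<^sub>1\<^sup>t b\<^sub>2 + a\<^sub>2\<^sup>t b\<^sub>1)\<close> (from \<open>\<surd>2 \<cdot> \<surd>2 = 2\<close>), the
  skew blocks another \<open>tr([a\<^sub>2][b\<^sub>1]) + tr([a\<^sub>1][b\<^sub>2]) = -2 (a\<^sub>2\<^sup>t b\<^sub>1 + a\<^sub>1\<^sup>t b\<^sub>2)\<close>.\<close>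
lemma trace_prod7_g2mat:
  "trace_prod7 (g2mat a1 a2 A) (g2mat b1 b2 B) =
     2 * trace_prod3 A B - 6 * (dot3 a1 b2 + dot3 a2 b1)"
proof -
  define s where "s = complex_of_real (sqrt 2)"
  have "s * s = 2"
    unfolding s_def by (simp flip: of_real_mult)
  then have s_s: "s * (s * x) = 2 * x" for x
    by (metis mult.assoc)
  show ?thesis
    unfolding trace_prod7_def trace_prod3_def dot3_def sum_lessThan_7 sum_lessThan_3
      g2mat_def s_def[symmetric]
    by (simp add: skew3_def cross3_def) (simp add: s_s algebra_simps)
qed

lemma trace_prod7_double_pole_coeff:
  "trace_prod7 (double_pole_coeff \<mu> \<alpha>1 \<alpha>2) (g2mat x1 x2 X) = 2 * \<mu> * dot3 \<alpha>2 (mv3 X \<alpha>1)"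
  by (simp add: double_pole_coeff_def trace_prod7_g2mat dot3_zero_left
      trace_prod3_scale_left trace_prod3_outer3_left)

lemma trace_prod7_simple_pole_coeff:
  "trace_prod7 (simple_pole_coeff \<alpha>1 \<alpha>2 c1 c2 \<beta>1 \<beta>2) (g2mat x1 x2 X) =
     2 * (dot3 \<beta>2 (mv3 X \<alpha>1) - dot3 \<alpha>2 (mv3 X \<beta>1)) - 6 * (c1 * dot3 \<alpha>1 x2 + c2 * dot3 \<alpha>2 x1)"
  by (simp add: simple_pole_coeff_def trace_prod7_g2mat trace_prod3_diff_left
      trace_prod3_outer3_left dot3_scale_left)

lemma trace_prod7_double_pole_simple_pole:
  assumes "dot3 \<alpha>1 \<alpha>2 = 0"
  shows "trace_prod7 (double_pole_coeff \<mu> \<alpha>1 \<alpha>2) (simple_pole_coeff \<alpha>1 \<alpha>2 c1 c2 \<beta>1 \<beta>2) = 0"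
proof -
  have "dot3 \<alpha>2 \<alpha>1 = 0"
    using assms by (simp add: dot3_commute)
  then show ?thesis
    by (simp add: simple_pole_coeff_def trace_prod7_double_pole_coeff dot3_mv3_diff dot3_mv3_outer3)
qed

lemma trace_prod7_simple_poles:
  assumes "dot3 \<alpha>1 \<alpha>2 = 0" "dot3 \<alpha>1 \<beta>2 = 0" "dot3 \<alpha>2 \<beta>1 = 0"
  shows "trace_prod7 (simple_pole_coeff \<alpha>1 \<alpha>2 c1 c2 \<beta>1 \<beta>2)
           (simple_pole_coeff \<alpha>1 \<alpha>2 d1 d2 \<gamma>1 \<gamma>2) = 0"
proof -
  have "dot3 \<alpha>2 \<alpha>1 = 0" "dot3 \<beta>2 \<alpha>1 = 0" "dot3 \<beta>1 \<alpha>2 = 0"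
    using assms by (simp_all add: dot3_commute)
  with assms show ?thesis
    unfolding simple_pole_coeff_def[of _ _ d1]
    by (simp add: trace_prod7_simple_pole_coeff dot3_mv3_diff dot3_mv3_outer3 dot3_scale_right)
qed

lemma trace_prod7_eigen_simple_pole:
  assumes "dot3 \<alpha>1 x2 = 0" "dot3 \<alpha>2 x1 = 0"
    and "mv3 X \<alpha>1 = (\<lambda>i. k1 * \<alpha>1 i)" "mv3 (\<lambda>i j. - transp3 X i j) \<alpha>2 = (\<lambda>i. k2 * \<alpha>2 i)"
  shows "trace_prod7 (g2mat x1 x2 X) (simple_pole_coeff \<alpha>1 \<alpha>2 c1 c2 \<beta>1 \<beta>2) =
           2 * (k1 * dot3 \<alpha>1 \<beta>2 + k2 * dot3 \<alpha>2 \<beta>1)"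
  using assms dot3_mv3_left_eigenvector[OF assms(4)]
  by (simp add: trace_prod7_commute[of "g2mat _ _ _"] trace_prod7_simple_pole_coeff
      dot3_scale_right dot3_commute[of \<beta>2] dot3_commute[of \<beta>1])

lemma fls_times_nth_lower_bounds:
  fixes f g :: "'a::comm_ring_1 fls"
  assumes "\<forall>k<a. f $$ k = 0" "\<forall>k<b. g $$ k = 0"
  shows "(f * g) $$ n = (\<Sum>i=a..n-b. f $$ i * g $$ (n - i))"
proof (cases "f = 0 \<or> g = 0")
  case True
  then show ?thesis by auto
next
  case False
  then have "a \<le> fls_subdegree f" "b \<le> fls_subdegree g"
    using assms by (metis nth_fls_subdegree_nonzero not_le)+
  then have "(\<Sum>i=fls_subdegree f..n - fls_subdegree g. f $$ i * g $$ (n - i)) =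
             (\<Sum>i=a..n-b. f $$ i * g $$ (n - i))"
    by (intro sum.mono_neutral_left) (auto simp: nth_less_subdegree_zero)
  then show ?thesis
    by (simp add: fls_times_nth(2))
qed

lemma tr_prod_nth:
  assumes "\<forall>k<a. mcoeff L k = (\<lambda>i j. 0)" "\<forall>k<b. mcoeff M k = (\<lambda>i j. 0)"
  shows "tr_prod L M $$ n = (\<Sum>k=a..n-b. trace_prod7 (mcoeff L k) (mcoeff M (n - k)))"
proof -
  have entry: "(L i j * M j i) $$ n = (\<Sum>k=a..n-b. L i j $$ k * M j i $$ (n - k))" for i j
    using assms by (intro fls_times_nth_lower_bounds) (auto simp: mcoeff_def dest: fun_cong)
  have "tr_prod L M $$ n = (\<Sum>i<7. \<Sum>j<7. \<Sum>k=a..n-b. L i j $$ k * M j i $$ (n - k))"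
    by (simp add: tr_prod_def fls_nth_sum entry)
  also have "\<dots> = (\<Sum>k=a..n-b. \<Sum>i<7. \<Sum>j<7. L i j $$ k * M j i $$ (n - k))"
    by (simp add: sum.swap[of _ "{a..n-b}"])
  finally show ?thesis
    by (simp add: trace_prod7_def mcoeff_def)
qed

lemma tr_prod_principal_part:
  assumes "\<forall>k < -2. mcoeff L k = (\<lambda>i j. 0)" "\<forall>k < -1. mcoeff M k = (\<lambda>i j. 0)"
  shows "\<forall>n < -3. tr_prod L M $$ n = 0"
    and "tr_prod L M $$ (-3) = trace_prod7 (mcoeff L (-2)) (mcoeff M (-1))"
    and "tr_prod L M $$ (-2) =
           trace_prod7 (mcoeff L (-2)) (mcoeff M 0) + trace_prod7 (mcoeff L (-1)) (mcoeff M (-1))"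
    and "fls_residue (tr_prod L M) =
           trace_prod7 (mcoeff L (-2)) (mcoeff M 1) + trace_prod7 (mcoeff L (-1)) (mcoeff M 0)
           + trace_prod7 (mcoeff L 0) (mcoeff M (-1))"
proof -
  note nth = tr_prod_nth[OF assms]
  have "{-2..-2::int} = {-2}" "{-2..-1::int} = {-2,-1}" "{-2..0::int} = {-2,-1,0}"
    by auto
  then show "tr_prod L M $$ (-3) = trace_prod7 (mcoeff L (-2)) (mcoeff M (-1))"
    and "tr_prod L M $$ (-2) =
           trace_prod7 (mcoeff L (-2)) (mcoeff M 0) + trace_prod7 (mcoeff L (-1)) (mcoeff M (-1))"
    and "fls_residue (tr_prod L M) =
           trace_prod7 (mcoeff L (-2)) (mcoeff M 1) + trace_prod7 (mcoeff L (-1)) (mcoeff M 0)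
           + trace_prod7 (mcoeff L 0) (mcoeff M (-1))"
    by (simp_all add: nth)
  show "\<forall>n < -3. tr_prod L M $$ n = 0"
    by (simp add: nth)
qed

theorem lemma5p3:
  fixes L \<omega> :: "nat \<Rightarrow> nat \<Rightarrow> complex fls"
    and \<alpha>1 \<alpha>2 :: cvec
    and \<mu> \<beta>01 \<beta>02 :: complex and \<beta>1 \<beta>2 :: cvec
    and a1 a2 :: cvec and A :: cmat and \<kappa>1 \<kappa>2 :: complex
    and b1 b2 :: cvec and B :: cmat
    and t\<beta>01 t\<beta>02 :: complex and t\<beta>1 t\<beta>2 :: cvec
    and w1 w2 :: cvec and W :: cmat and t\<kappa>1 t\<kappa>2 :: complex
    and v1 v2 :: cvec and W1 :: cmat
  assumes \<alpha>: "dot3 \<alpha>1 \<alpha>2 = 0"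
    \<comment> \<open>L is g-valued with the prescribed expansion at gamma\<close>
    and L_g: "\<forall>k. mcoeff L k \<in> G2"
    and L_low: "\<forall>k < -2. mcoeff L k = (\<lambda>i j. 0)"
    and L_m2: "mcoeff L (-2) = g2mat (\<lambda>_. 0) (\<lambda>_. 0) (\<lambda>i j. \<mu> * outer3 \<alpha>1 \<alpha>2 i j)"
    and L_m1: "mcoeff L (-1) = g2mat (\<lambda>i. \<beta>01 * \<alpha>1 i) (\<lambda>i. \<beta>02 * \<alpha>2 i)
                 (\<lambda>i j. outer3 \<alpha>1 \<beta>2 i j - outer3 \<beta>1 \<alpha>2 i j)"
    and L_m1c: "dot3 \<alpha>1 \<beta>2 = 0" "dot3 \<alpha>2 \<beta>1 = 0"
    and L_0: "mcoeff L 0 = g2mat a1 a2 A" "trace3 A = 0"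
    and L_0c: "dot3 \<alpha>1 a2 = 0" "dot3 \<alpha>2 a1 = 0"
    and L_\<kappa>: "mv3 A \<alpha>1 = (\<lambda>i. \<kappa>1 * \<alpha>1 i)"
               "mv3 (\<lambda>i j. - transp3 A i j) \<alpha>2 = (\<lambda>i. \<kappa>2 * \<alpha>2 i)"
    and L_1: "mcoeff L 1 = g2mat b1 b2 B" "trace3 B = 0"
    and L_1c: "dot3 \<alpha>2 (mv3 B \<alpha>1) = 0"
    \<comment> \<open>omega = (series) dz is g-valued with the prescribed expansion at gamma\<close>
    and \<omega>_g: "\<forall>k. mcoeff \<omega> k \<in> G2"
    and \<omega>_low: "\<forall>k < -1. mcoeff \<omega> k = (\<lambda>i j. 0)"
    and \<omega>_m1: "mcoeff \<omega> (-1) = g2mat (\<lambda>i. t\<beta>01 * \<alpha>1 i) (\<lambda>i. t\<beta>02 * \<alpha>2 i)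
                 (\<lambda>i j. outer3 \<alpha>1 t\<beta>2 i j - outer3 t\<beta>1 \<alpha>2 i j)"
    and \<omega>_m1c: "dot3 \<alpha>1 t\<beta>2 = 1" "dot3 \<alpha>2 t\<beta>1 = 1"
    and \<omega>_0: "mcoeff \<omega> 0 = g2mat w1 w2 W" "trace3 W = 0"
    and \<omega>_0c: "dot3 \<alpha>1 w2 = 0" "dot3 \<alpha>2 w1 = 0"
    and \<omega>_\<kappa>: "mv3 W \<alpha>1 = (\<lambda>i. t\<kappa>1 * \<alpha>1 i)"
               "mv3 (\<lambda>i j. - transp3 W i j) \<alpha>2 = (\<lambda>i. t\<kappa>2 * \<alpha>2 i)"
    and \<omega>_1: "mcoeff \<omega> 1 = g2mat v1 v2 W1" "trace3 W1 = 0"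
    and \<omega>_1c: "dot3 \<alpha>2 (mv3 W1 \<alpha>1) = 0"
  shows "(\<forall>n < -1. fls_nth (tr_prod L \<omega>) n = 0) \<and> fls_residue (tr_prod L \<omega>) = 2 * (\<kappa>1 + \<kappa>2)"
proof -
  have L_m2': "mcoeff L (-2) = double_pole_coeff \<mu> \<alpha>1 \<alpha>2"
    and L_m1': "mcoeff L (-1) = simple_pole_coeff \<alpha>1 \<alpha>2 \<beta>01 \<beta>02 \<beta>1 \<beta>2"
    and \<omega>_m1': "mcoeff \<omega> (-1) = simple_pole_coeff \<alpha>1 \<alpha>2 t\<beta>01 t\<beta>02 t\<beta>1 t\<beta>2"
    using L_m2 L_m1 \<omega>_m1 by (simp_all add: double_pole_coeff_def simple_pole_coeff_def)
  have "dot3 \<alpha>2 (mv3 W \<alpha>1) = 0"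
    using \<alpha> by (simp add: \<omega>_\<kappa>(1) dot3_scale_right dot3_commute)
  then have "trace_prod7 (mcoeff L (-2)) (mcoeff \<omega> 0) = 0"
    and "trace_prod7 (mcoeff L (-2)) (mcoeff \<omega> 1) = 0"
    by (simp_all add: L_m2' \<omega>_0(1) \<omega>_1(1) \<omega>_1c trace_prod7_double_pole_coeff)
  moreover have "trace_prod7 (mcoeff L (-2)) (mcoeff \<omega> (-1)) = 0"
    by (simp add: L_m2' \<omega>_m1' trace_prod7_double_pole_simple_pole \<alpha>)
  moreover have "trace_prod7 (mcoeff L (-1)) (mcoeff \<omega> (-1)) = 0"
    by (simp add: L_m1' \<omega>_m1' trace_prod7_simple_poles \<alpha> L_m1c)
  moreover have "trace_prod7 (mcoeff L (-1)) (mcoeff \<omega> 0) = 0"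
    using trace_prod7_eigen_simple_pole[OF \<omega>_0c \<omega>_\<kappa>]
    by (simp add: L_m1' \<omega>_0(1) trace_prod7_commute[of _ "g2mat _ _ _"] L_m1c)
  moreover have "trace_prod7 (mcoeff L 0) (mcoeff \<omega> (-1)) = 2 * (\<kappa>1 + \<kappa>2)"
    using trace_prod7_eigen_simple_pole[OF L_0c L_\<kappa>] by (simp add: L_0(1) \<omega>_m1' \<omega>_m1c)
  moreover have "n < -1 \<Longrightarrow> n < -3 \<or> n = -3 \<or> n = -2" for n :: int
    by linarith
  ultimately show ?thesis
    using tr_prod_principal_part[OF L_low \<omega>_low] by fastforce
qed

end
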